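(* Let $\alpha>3$ be an integer, and let $u\in\mathcal{D}(A^{\alpha/2})_{\mathbb{C}}$, $v\in\mathcal{D}(A^{(\alpha+1)/2})_{\mathbb{C}}$, $w\in\mathcal{D}(A^{\alpha})_{\mathbb{C}}$. Then $$|(B(u,v),A^\alpha w)|\le 2^{\alpha+\frac32} c_A\Big(|u|^{1/2}|Au|^{1/2}|A^{\frac{1+\alpha}{2}}v|+|A^{\alpha/2}u|\,|A^{1/2}v|^{1/2}|A^{3/2}v|^{1/2}\Big)|A^{\alpha/2}w|.$$
   Context: $H$ is the closure in $L^2([0,L]^2)^2$ of the $\mathbb{R}^2$-valued $[0,L]^2$-periodic trigonometric polynomials $v$ with $\nabla\cdot v=0$ and zero mean, with $L^2$ inner product and norm $|\cdot|$; $A=-\Delta$ is the Stokes operator with spectrally defined powers and domains $\mathcal{D}(A^\sigma)$; $B(u,v)=\mathcal{P}((u\cdot\nabla)v)$ with $\mathcal{P}$ the Leray projection. $H_{\mathbb{C}}=H+iH$ with the complex inner product $(u+iv,u'+iv')=(u,u')+(v,v')+i[(v,u')-(u,v')]$, $\mathcal{D}(A^\sigma)_{\mathbb{C}}=\mathcal{D}(A^\sigma)+i\mathcal{D}(A^\sigma)$, and $A$, $B$ extended complex-linearly and complex-bilinearly. $c_A$ is an absolute constant for which the Agmon inequality $|u|_{L^\infty}\le c_A|u|^{1/2}|Au|^{1/2}$ holds in the real space. *)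

theory Defs
  imports "HOL-Analysis.Analysis"
begin

text \<open>Fourier model of the complexified space H_C on the torus [0,L]^2.
An element is represented by its Fourier coefficients
u(x) = sum_k hat u(k) exp(i kappa_k . x), kappa_k = (2 pi / L) k, k in Z^2,
hat u(k) in C^2 (a pair of complex numbers).\<close>

type_synonym field2 = "int \<times> int \<Rightarrow> complex \<times> complex"

definition kappa :: "real \<Rightarrow> int \<times> int \<Rightarrow> real \<times> real" where
  "kappa L k = (2 * pi / L * of_int (fst k), 2 * pi / L * of_int (snd k))"

text \<open>|kappa_k|^2, the eigenvalue of A = -Delta on the k-th mode.\<close>
definition ksq :: "real \<Rightarrow> int \<times> int \<Rightarrow> real" where
  "ksq L k = (fst (kappa L k))\<^sup>2 + (snd (kappa L k))\<^sup>2"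

definition cinner2 :: "complex \<times> complex \<Rightarrow> complex \<times> complex \<Rightarrow> complex" where
  "cinner2 a b = fst a * cnj (fst b) + snd a * cnj (snd b)"

definition cnorm2sq :: "complex \<times> complex \<Rightarrow> real" where
  "cnorm2sq a = (cmod (fst a))\<^sup>2 + (cmod (snd a))\<^sup>2"

definition scal2 :: "complex \<Rightarrow> complex \<times> complex \<Rightarrow> complex \<times> complex" where
  "scal2 c a = (c * fst a, c * snd a)"

definition kdot :: "real \<times> real \<Rightarrow> complex \<times> complex \<Rightarrow> complex" where
  "kdot \<kappa> a = of_real (fst \<kappa>) * fst a + of_real (snd \<kappa>) * snd a"

text \<open>H_C: divergence free (kappa_k . hat u(k) = 0), zero mean (hat u(0) = 0), square summable.\<close>
definition inHc :: "real \<Rightarrow> field2 \<Rightarrow> bool" where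
  "inHc L u \<longleftrightarrow> u (0, 0) = (0, 0) \<and> (\<forall>k. kdot (kappa L k) (u k) = 0)
      \<and> (\<lambda>k. cnorm2sq (u k)) summable_on UNIV"

text \<open>Real elements of H: hat u(-k) = conj (hat u(k)).\<close>
definition realH :: "field2 \<Rightarrow> bool" where
  "realH u \<longleftrightarrow> (\<forall>k. u (- fst k, - snd k) = (cnj (fst (u k)), cnj (snd (u k))))"

text \<open>Spectrally defined powers of the Stokes operator A = -Delta.\<close>
definition Apow :: "real \<Rightarrow> real \<Rightarrow> field2 \<Rightarrow> field2" where
  "Apow L \<sigma> u = (\<lambda>k. scal2 (of_real (ksq L k powr \<sigma>)) (u k))"

definition inD :: "real \<Rightarrow> real \<Rightarrow> field2 \<Rightarrow> bool" where
  "inD L \<sigma> u \<longleftrightarrow> inHc L u \<and> (\<lambda>k. cnorm2sq (Apow L \<sigma> u k)) summable_on UNIV"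

text \<open>L^2([0,L]^2) inner product and norm via Parseval.\<close>
definition hinner :: "real \<Rightarrow> field2 \<Rightarrow> field2 \<Rightarrow> complex" where
  "hinner L u v = of_real (L\<^sup>2) * (\<Sum>\<^sub>\<infinity>k. cinner2 (u k) (v k))"

definition hnorm :: "real \<Rightarrow> field2 \<Rightarrow> real" where
  "hnorm L u = sqrt (L\<^sup>2 * (\<Sum>\<^sub>\<infinity>k. cnorm2sq (u k)))"

definition evalF :: "real \<Rightarrow> field2 \<Rightarrow> real \<times> real \<Rightarrow> complex \<times> complex" where
  "evalF L u x = (\<Sum>\<^sub>\<infinity>k. scal2 (cis (fst (kappa L k) * fst x + snd (kappa L k) * snd x)) (u k))"

definition Linf :: "real \<Rightarrow> field2 \<Rightarrow> real" where
  "Linf L u = (SUP x\<in>UNIV. norm (evalF L u x))"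

definition leray :: "real \<Rightarrow> int \<times> int \<Rightarrow> complex \<times> complex \<Rightarrow> complex \<times> complex" where
  "leray L k a = (if k = (0, 0) then (0, 0) else
     (fst a - kdot (kappa L k) a / of_real (ksq L k) * of_real (fst (kappa L k)),
      snd a - kdot (kappa L k) a / of_real (ksq L k) * of_real (snd (kappa L k))))"

text \<open>B(u,v) = P((u . grad) v): convolution of hat u(p) . (i kappa_q) hat v(q), p + q = k.\<close>
definition Bop :: "real \<Rightarrow> field2 \<Rightarrow> field2 \<Rightarrow> field2" where
  "Bop L u v = (\<lambda>k. leray L k
     (\<Sum>\<^sub>\<infinity>p. scal2 (\<i> * kdot (kappa L (fst k - fst p, snd k - snd p)) (u p))
                     (v (fst k - fst p, snd k - snd p))))"

end

theory Submission
  imports Defs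
begin

text \<open>By Parseval the trilinear form is a sum over Fourier modes. On the mode \<open>k\<close>,
  \<open>|B(u,v)\<^sub>k|\<close> is at most the convolution of \<open>|\<hat>u|\<close> with \<open>|\<kappa>||\<hat>v|\<close>, and the splitting
  \<open>|\<kappa>\<^sub>k|\<^sup>\<alpha> \<le> 2\<^sup>\<alpha>\<^sup>-\<^sup>1 (|\<kappa>\<^sub>p|\<^sup>\<alpha> + |\<kappa>\<^sub>k\<^sub>-\<^sub>p|\<^sup>\<alpha>)\<close> produces two convolutions, which Young's
  inequality \<open>\<ell>\<^sup>1 * \<ell>\<^sup>2 \<subseteq> \<ell>\<^sup>2\<close> bounds by \<open>\<parallel>\<hat>u\<parallel>\<^sub>\<ell>\<^sub>1 |A\<^sup>(\<^sup>\<alpha>\<^sup>+\<^sup>1\<^sup>)\<^sup>/\<^sup>2 v| |A\<^sup>\<alpha>\<^sup>/\<^sup>2 w|\<close>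
  and \<open>\<parallel>|\<kappa>|\<hat>v\<parallel>\<^sub>\<ell>\<^sub>1 |A\<^sup>\<alpha>\<^sup>/\<^sup>2 u| |A\<^sup>\<alpha>\<^sup>/\<^sup>2 w|\<close>. The \<open>\<ell>\<^sup>1\<close> norms of Fourier coefficients satisfy
  Agmon's inequality in the form \<open>\<Sum>|\<hat>f\<^sub>k| \<le> 4/(\<pi> L) |f|\<^sup>1\<^sup>/\<^sup>2 |Af|\<^sup>1\<^sup>/\<^sup>2\<close>, obtained from
  Cauchy--Schwarz against the weight \<open>\<mu> + |\<kappa>\<^sub>k|\<^sup>2\<close> and an arctangent bound on lattice sums.
  Finally, the assumed Agmon inequality, tested on the field \<open>(0, 2 cos (2\<pi>x\<^sub>1/L))\<close>, forces
  \<open>c\<^sub>A \<ge> 1/(\<surd>2 \<pi>)\<close>, which turns the constant \<open>2\<^sup>\<alpha>\<^sup>-\<^sup>1 4/\<pi>\<close> into \<open>2\<^sup>\<alpha>\<^sup>+\<^sup>3\<^sup>/\<^sup>2 c\<^sub>A\<close>.\<close>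

section \<open>Nonnegative infinite sums and \<open>\<ell>\<^sup>2\<close> norms\<close>

lemma nonneg_summable_on_infsum_le:
  fixes f :: "'a \<Rightarrow> real"
  assumes "\<And>x. f x \<ge> 0" and "\<And>F. finite F \<Longrightarrow> sum f F \<le> M"
  shows "f summable_on UNIV" and "infsum f UNIV \<le> M"
proof -
  show s: "f summable_on UNIV"
    by (rule nonneg_bdd_above_summable_on) (use assms in \<open>auto intro!: bdd_aboveI2\<close>)
  show "infsum f UNIV \<le> M"
    by (rule infsum_le_finite_sums[OF s]) (use assms in auto)
qed

lemma nonneg_le_infsum:
  fixes f :: "'a \<Rightarrow> real"
  assumes "f summable_on UNIV" and "\<And>x. f x \<ge> 0"
  shows "f x \<le> infsum f UNIV"
  using finite_sum_le_infsum[OF assms(1), of "{x}"] assms(2) by simp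

lemma summable_on_mult_bounded:
  fixes a b :: "'a \<Rightarrow> real"
  assumes "a summable_on UNIV" "\<And>x. a x \<ge> 0" "\<And>x. b x \<ge> 0" "\<And>x. b x \<le> M"
  shows "(\<lambda>x. a x * b x) summable_on UNIV"
  by (rule summable_on_comparison_test[OF summable_on_cmult_left[OF assms(1), of M]])
    (use assms in \<open>auto intro: mult_left_mono\<close>)

lemma summable_on_sum:
  fixes f :: "'b \<Rightarrow> 'a \<Rightarrow> real"
  assumes "finite I" "\<And>i. i \<in> I \<Longrightarrow> f i summable_on UNIV"
  shows "(\<lambda>x. \<Sum>i\<in>I. f i x) summable_on UNIV"
  using assms by (induction I rule: finite_induct) (auto intro: summable_on_add)

lemma infsum_sum:
  fixes f :: "'b \<Rightarrow> 'a \<Rightarrow> real"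
  assumes "finite I" "\<And>i. i \<in> I \<Longrightarrow> f i summable_on UNIV"
  shows "infsum (\<lambda>x. \<Sum>i\<in>I. f i x) UNIV = (\<Sum>i\<in>I. infsum (f i) UNIV)"
  using assms by (induction I rule: finite_induct) (simp_all add: infsum_add summable_on_sum)

text \<open>Junk value: \<open>l2 f = 0\<close> whenever \<open>f\<^sup>2\<close> is not summable.\<close>
definition l2 :: "('a \<Rightarrow> real) \<Rightarrow> real" where
  "l2 f = sqrt (infsum (\<lambda>x. (f x)\<^sup>2) UNIV)"

lemma l2_nonneg: "l2 f \<ge> 0"
  unfolding l2_def by (simp add: infsum_nonneg)

lemma le_l2:
  assumes "(\<lambda>x. (f x)\<^sup>2) summable_on UNIV"
  shows "f x \<le> l2 f"
proof -
  have "(f x)\<^sup>2 \<le> infsum (\<lambda>x. (f x)\<^sup>2) UNIV"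
    by (rule nonneg_le_infsum[OF assms]) simp
  then show ?thesis unfolding l2_def by (rule real_le_rsqrt)
qed

lemma l2_cmult: "c \<ge> 0 \<Longrightarrow> l2 (\<lambda>x. c * f x) = c * l2 f"
  unfolding l2_def by (simp add: power_mult_distrib infsum_cmult_right' real_sqrt_mult)

lemma l2_mono:
  assumes "\<And>x. \<bar>f x\<bar> \<le> \<bar>g x\<bar>" and "(\<lambda>x. (g x)\<^sup>2) summable_on UNIV"
  shows "l2 f \<le> l2 g"
proof -
  have le: "(f x)\<^sup>2 \<le> (g x)\<^sup>2" for x using assms(1) by (simp add: abs_le_square_iff)
  have "(\<lambda>x. (f x)\<^sup>2) summable_on UNIV"
    by (rule summable_on_comparison_test[OF assms(2)]) (use le in auto)
  then show ?thesis
    unfolding l2_def by (intro real_sqrt_le_mono infsum_mono[OF _ assms(2) le])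
qed

lemma L2_set_le_l2:
  assumes "(\<lambda>x. (f x)\<^sup>2) summable_on UNIV"
  shows "L2_set f F \<le> l2 f"
proof (cases "finite F")
  case True
  then show ?thesis
    unfolding L2_set_def l2_def
    by (intro real_sqrt_le_mono finite_sum_le_infsum[OF assms]) auto
qed (simp add: l2_nonneg)

lemma finite_sum_mult_le_L2_set:
  fixes a b :: "'a \<Rightarrow> real"
  assumes "\<And>x. a x \<ge> 0" "\<And>x. b x \<ge> 0"
  shows "(\<Sum>x\<in>F. a x * b x) \<le> L2_set a F * L2_set b F"
  using L2_set_mult_ineq[where f=a and g=b and A=F] assms by simp

section \<open>Discrete convolution and Young's inequality\<close>

definition dconv :: "('a::ab_group_add \<Rightarrow> real) \<Rightarrow> ('a \<Rightarrow> real) \<Rightarrow> 'a \<Rightarrow> real" where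
  "dconv a b k = (\<Sum>\<^sub>\<infinity>p. a p * b (k - p))"

lemma bij_betw_diff_left: "bij_betw (\<lambda>p::'a::ab_group_add. k - p) UNIV UNIV"
  by (rule bij_betwI[where g="\<lambda>p. k - p"]) auto

lemma summable_on_dconv_summands:
  fixes a b :: "'a::ab_group_add \<Rightarrow> real"
  assumes "a summable_on UNIV" "\<And>x. a x \<ge> 0" "\<And>x. b x \<ge> 0" "(\<lambda>x. (b x)\<^sup>2) summable_on UNIV"
  shows "(\<lambda>p. a p * b (k - p)) summable_on UNIV"
  by (rule summable_on_mult_bounded[OF assms(1,2)]) (use assms(3) le_l2[OF assms(4)] in auto)

lemma dconv_commute: "dconv a b = dconv b a"
proof
  fix k
  have "dconv a b k = (\<Sum>\<^sub>\<infinity>p. a (k - p) * b (k - (k - p)))"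
    unfolding dconv_def by (rule infsum_reindex_bij_betw[OF bij_betw_diff_left, symmetric])
  then show "dconv a b k = dconv b a k"
    unfolding dconv_def by (simp add: mult.commute)
qed

lemma summable_on_dconv_summands_swap:
  fixes a b :: "'a::ab_group_add \<Rightarrow> real"
  assumes "a summable_on UNIV" "\<And>x. a x \<ge> 0" "\<And>x. b x \<ge> 0" "(\<lambda>x. (b x)\<^sup>2) summable_on UNIV"
  shows "(\<lambda>p. b p * a (k - p)) summable_on UNIV"
proof -
  have "(\<lambda>p. (\<lambda>q. a q * b (k - q)) (k - p)) summable_on UNIV"
    by (rule summable_on_reindex_bij_betw[OF bij_betw_diff_left, THEN iffD2])
      (rule summable_on_dconv_summands[OF assms])
  then show ?thesis by (simp add: mult.commute)
qed

text \<open>Young's inequality \<open>\<ell>\<^sup>1 * \<ell>\<^sup>2 \<subseteq> \<ell>\<^sup>2\<close>, in the dual form tested against \<open>c \<in> \<ell>\<^sup>2\<close>.\<close>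
lemma Young_dconv:
  fixes a b c :: "'a::ab_group_add \<Rightarrow> real"
  assumes a: "a summable_on UNIV" "\<And>x. a x \<ge> 0"
    and b: "(\<lambda>x. (b x)\<^sup>2) summable_on UNIV" "\<And>x. b x \<ge> 0"
    and c: "(\<lambda>x. (c x)\<^sup>2) summable_on UNIV" "\<And>x. c x \<ge> 0"
  shows "(\<lambda>k. dconv a b k * c k) summable_on UNIV"
    and "(\<Sum>\<^sub>\<infinity>k. dconv a b k * c k) \<le> infsum a UNIV * l2 b * l2 c"
proof -
  have sk: "(\<lambda>p. a p * b (k - p) * c k) summable_on UNIV" for k
    using summable_on_dconv_summands[OF a b(2,1)] by (rule summable_on_cmult_left)
  have inner: "(\<Sum>k\<in>F. a p * b (k - p) * c k) \<le> a p * (l2 b * l2 c)" if F: "finite F" for F p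
  proof -
    have "(\<Sum>k\<in>F. b (k - p) * c k) \<le> L2_set (\<lambda>k. b (k - p)) F * L2_set c F"
      using b c by (intro finite_sum_mult_le_L2_set)
    also have "\<dots> \<le> l2 b * l2 c"
    proof (intro mult_mono L2_set_le_l2 c)
      have "L2_set (\<lambda>k. b (k - p)) F = L2_set b ((\<lambda>k. k - p) ` F)"
        unfolding L2_set_def by (subst sum.reindex) (auto intro: inj_onI)
      then show "L2_set (\<lambda>k. b (k - p)) F \<le> l2 b"
        using L2_set_le_l2[OF b(1)] by simp
    qed (auto simp: l2_nonneg)
    finally have "a p * (\<Sum>k\<in>F. b (k - p) * c k) \<le> a p * (l2 b * l2 c)"
      using a(2)[of p] by (rule mult_left_mono)
    then show ?thesis by (simp add: sum_distrib_left mult.assoc)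
  qed
  have fin: "(\<Sum>k\<in>F. dconv a b k * c k) \<le> infsum a UNIV * l2 b * l2 c" if F: "finite F" for F
  proof -
    have "(\<Sum>k\<in>F. dconv a b k * c k) = (\<Sum>k\<in>F. \<Sum>\<^sub>\<infinity>p. a p * b (k - p) * c k)"
      unfolding dconv_def using summable_on_dconv_summands[OF a b(2,1)]
      by (intro sum.cong refl infsum_cmult_left[symmetric]) auto
    also have "\<dots> = (\<Sum>\<^sub>\<infinity>p. \<Sum>k\<in>F. a p * b (k - p) * c k)"
      by (rule infsum_sum[OF F sk, symmetric])
    also have "\<dots> \<le> (\<Sum>\<^sub>\<infinity>p. a p * (l2 b * l2 c))"
      by (rule infsum_mono[OF summable_on_sum[OF F sk] summable_on_cmult_left[OF a(1)] inner[OF F]])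
    also have "\<dots> = infsum a UNIV * l2 b * l2 c"
      using a(1) by (simp add: infsum_cmult_left mult.assoc)
    finally show ?thesis .
  qed
  have nonneg: "dconv a b k * c k \<ge> 0" for k
    using a(2) b(2) c(2) by (simp add: dconv_def infsum_nonneg)
  show "(\<lambda>k. dconv a b k * c k) summable_on UNIV"
    by (rule nonneg_summable_on_infsum_le(1)[OF nonneg fin])
  show "(\<Sum>\<^sub>\<infinity>k. dconv a b k * c k) \<le> infsum a UNIV * l2 b * l2 c"
    by (rule nonneg_summable_on_infsum_le(2)[OF nonneg fin])
qed

section \<open>Lattice sums\<close>

text \<open>Comparison of \<open>\<Sum> 1/(s\<^sup>2 + n\<^sup>2)\<close> with \<open>\<integral> dt/(s\<^sup>2 + t\<^sup>2) = arctan (t/s)/s\<close>, via the mean value theorem.\<close>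
lemma inverse_add_sq_le_arctan_diff:
  fixes s n :: real
  assumes s: "s > 0" and n: "n \<ge> 1"
  shows "1 / (s\<^sup>2 + n\<^sup>2) \<le> (arctan (n / s) - arctan ((n - 1) / s)) / s"
proof -
  have ab: "(n - 1) / s < n / s" using s by (simp add: divide_strict_right_mono)
  obtain z where z: "(n - 1) / s < z" "z < n / s"
    and eq: "arctan (n / s) - arctan ((n - 1) / s) = (n / s - (n - 1) / s) * inverse (1 + z\<^sup>2)"
    using MVT2[OF ab, of arctan "\<lambda>x. inverse (1 + x\<^sup>2)"] DERIV_arctan by blast
  have z0: "z \<ge> 0" using z(1) n s by (smt (verit) divide_nonneg_pos)
  have "z\<^sup>2 \<le> (n / s)\<^sup>2" using z0 z(2) by (intro power_mono) auto
  then have zz: "1 + z\<^sup>2 \<le> (s\<^sup>2 + n\<^sup>2) / s\<^sup>2" using s by (simp add: power_divide add_divide_distrib)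
  have d: "n / s - (n - 1) / s = 1 / s" using s by (simp add: diff_divide_distrib)
  have "inverse ((s\<^sup>2 + n\<^sup>2) / s\<^sup>2) \<le> inverse (1 + z\<^sup>2)"
    by (rule le_imp_inverse_le[OF zz]) (simp add: add_pos_nonneg)
  then have "s\<^sup>2 / (s\<^sup>2 + n\<^sup>2) \<le> inverse (1 + z\<^sup>2)" by (simp add: inverse_eq_divide)
  then have "(1 / s) * (s\<^sup>2 / (s\<^sup>2 + n\<^sup>2)) \<le> (1 / s) * inverse (1 + z\<^sup>2)"
    using s by (intro mult_left_mono) auto
  then have "s / (s\<^sup>2 + n\<^sup>2) \<le> arctan (n / s) - arctan ((n - 1) / s)"
    using eq d s by (simp add: power2_eq_square)
  then have "s / (s\<^sup>2 + n\<^sup>2) / s \<le> (arctan (n / s) - arctan ((n - 1) / s)) / s"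
    using s by (intro divide_right_mono) auto
  then show ?thesis using s by simp
qed

lemma sum_inverse_add_sq_symmetric_le:
  fixes \<mu> :: real
  assumes mu: "\<mu> > 0"
  shows "(\<Sum>n\<in>{-int N..int N}. 1 / (\<mu> + (real_of_int n)\<^sup>2)) \<le> 1 / \<mu> + 2 * arctan (real N / sqrt \<mu>) / sqrt \<mu>"
proof (induction N)
  case 0 then show ?case by simp
next
  case (Suc N)
  define s where "s = sqrt \<mu>"
  have s: "s > 0" "s\<^sup>2 = \<mu>" using mu by (auto simp: s_def)
  have set: "{-int (Suc N)..int (Suc N)} = insert (int N + 1) (insert (- int N - 1) {-int N..int N})"
    by auto
  have st: "1 / (\<mu> + (real N + 1)\<^sup>2) \<le> (arctan ((real N + 1) / s) - arctan (real N / s)) / s"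
    using inverse_add_sq_le_arctan_diff[OF s(1), of "real N + 1"] s(2) by simp
  have "(\<Sum>n\<in>{-int (Suc N)..int (Suc N)}. 1 / (\<mu> + (real_of_int n)\<^sup>2))
      = 2 * (1 / (\<mu> + (real N + 1)\<^sup>2)) + (\<Sum>n\<in>{-int N..int N}. 1 / (\<mu> + (real_of_int n)\<^sup>2))"
    unfolding set by (simp add: power2_eq_square algebra_simps)
  also have "\<dots> \<le> 2 * ((arctan ((real N + 1) / s) - arctan (real N / s)) / s) + (1 / \<mu> + 2 * arctan (real N / s) / s)"
    using st Suc.IH unfolding s_def by linarith
  also have "\<dots> = 1 / \<mu> + 2 * arctan (real (Suc N) / s) / s"
    using s by (simp add: field_simps)
  finally show ?case unfolding s_def .
qed

lemma sum_inverse_add_sq_int_le: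
  fixes \<mu> :: real and A :: "int set"
  assumes mu: "\<mu> > 0" and A: "finite A"
  shows "(\<Sum>n\<in>A. 1 / (\<mu> + (real_of_int n)\<^sup>2)) \<le> 1 / \<mu> + pi / sqrt \<mu>"
proof -
  define N where "N = nat (\<Sum>n\<in>A. \<bar>n\<bar>)"
  have sub: "A \<subseteq> {-int N..int N}"
  proof
    fix x assume x: "x \<in> A"
    have "\<bar>x\<bar> \<le> (\<Sum>n\<in>A. \<bar>n\<bar>)" using member_le_sum[OF x, of abs] A by simp
    then show "x \<in> {-int N..int N}" unfolding N_def by auto
  qed
  have "(\<Sum>n\<in>A. 1 / (\<mu> + (real_of_int n)\<^sup>2)) \<le> (\<Sum>n\<in>{-int N..int N}. 1 / (\<mu> + (real_of_int n)\<^sup>2))"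
    by (rule sum_mono2[OF _ sub]) (use mu in \<open>auto intro!: add_pos_nonneg\<close>)
  also have "\<dots> \<le> 1 / \<mu> + 2 * arctan (real N / sqrt \<mu>) / sqrt \<mu>" by (rule sum_inverse_add_sq_symmetric_le[OF mu])
  also have "\<dots> \<le> 1 / \<mu> + pi / sqrt \<mu>"
  proof -
    have "2 * arctan (real N / sqrt \<mu>) \<le> pi" using arctan_bounded[of "real N / sqrt \<mu>"] by linarith
    then show ?thesis using mu by (simp add: divide_right_mono)
  qed
  finally show ?thesis .
qed

lemma inverse_add_pi_div_sqrt_sq_le:
  fixes \<mu> :: real
  assumes "\<mu> \<ge> 1/2"
  shows "(1 / \<mu> + pi / sqrt \<mu>)\<^sup>2 \<le> 32 / \<mu>"
proof -
  define t where "t = sqrt \<mu>"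
  have t: "t > 0" "t\<^sup>2 = \<mu>" using assms by (auto simp: t_def)
  have "(2/3)\<^sup>2 \<le> t\<^sup>2" using t assms by (simp add: power2_eq_square)
  then have "2/3 \<le> t" using t(1) by (rule power2_le_imp_le[OF _ less_imp_le])
  then have "1 / t \<le> 3/2" using t by (simp add: divide_simps)
  then have "1 / t + pi \<le> 11/2" using pi_less_4 by linarith
  then have "(1 / t + pi)\<^sup>2 \<le> (11/2)\<^sup>2" using t(1) pi_gt_zero
    by (intro power_mono) (simp_all add: add_pos_pos less_imp_le)
  then have "(1 / t + pi)\<^sup>2 \<le> 32" by (simp add: power2_eq_square)
  moreover have "(1 / \<mu> + pi / sqrt \<mu>)\<^sup>2 = (1 / t + pi)\<^sup>2 / \<mu>"
    using t unfolding t_def[symmetric] by (simp add: field_simps power2_eq_square)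
  ultimately show ?thesis using assms by (simp add: divide_right_mono)
qed

lemma sum_le_sum_fst_mult_sum_snd:
  fixes g h :: "'a \<Rightarrow> real"
  assumes "finite F" "\<And>x. g x \<ge> 0" "\<And>y. h y \<ge> 0"
  shows "(\<Sum>k\<in>F. g (fst k) * h (snd k)) \<le> (\<Sum>x\<in>fst ` F. g x) * (\<Sum>y\<in>snd ` F. h y)"
proof -
  have "(\<Sum>k\<in>F. g (fst k) * h (snd k)) \<le> (\<Sum>k\<in>fst ` F \<times> snd ` F. g (fst k) * h (snd k))"
  proof (rule sum_mono2)
    show "F \<subseteq> fst ` F \<times> snd ` F" by (auto intro: rev_image_eqI)
  qed (use assms in \<open>auto intro: mult_nonneg_nonneg\<close>)
  also have "\<dots> = (\<Sum>x\<in>fst ` F. g x) * (\<Sum>y\<in>snd ` F. h y)"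
    unfolding sum_product sum.cartesian_product by (simp add: case_prod_beta)
  finally show ?thesis .
qed

text \<open>The inequality \<open>4xy \<le> (x + y)\<^sup>2\<close> separates the two lattice coordinates.\<close>
lemma sum_inverse_lattice_sq_le:
  fixes r :: real and F :: "(int \<times> int) set"
  assumes r: "r \<ge> 1" and F: "finite F"
  shows "(\<Sum>k\<in>F. 1 / (r + (real_of_int (fst k))\<^sup>2 + (real_of_int (snd k))\<^sup>2)\<^sup>2) \<le> 16 / r"
proof -
  define \<mu> where "\<mu> = r / 2"
  have mu: "\<mu> > 0" "\<mu> \<ge> 1/2" using r by (auto simp: \<mu>_def)
  define g where "g n = 1 / (\<mu> + (real_of_int n)\<^sup>2)" for n :: int
  have g: "g n \<ge> 0" for n using mu by (simp add: g_def add_pos_nonneg less_imp_le)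
  have "1 / (r + a + b)\<^sup>2 \<le> 1/4 * (1 / (\<mu> + a) * (1 / (\<mu> + b)))" if "a \<ge> 0" "b \<ge> 0" for a b :: real
  proof -
    have "4 * ((\<mu> + a) * (\<mu> + b)) \<le> (r + a + b)\<^sup>2"
      unfolding \<mu>_def using zero_le_power2[of "a - b"] by (simp add: power2_eq_square algebra_simps)
    then have "1 / (r + a + b)\<^sup>2 \<le> 1 / (4 * ((\<mu> + a) * (\<mu> + b)))"
      using that mu r by (intro divide_left_mono) (auto intro!: mult_pos_pos)
    then show ?thesis by simp
  qed
  then have "(\<Sum>k\<in>F. 1 / (r + (real_of_int (fst k))\<^sup>2 + (real_of_int (snd k))\<^sup>2)\<^sup>2)
      \<le> 1/4 * (\<Sum>k\<in>F. g (fst k) * g (snd k))"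
    unfolding sum_distrib_left g_def by (intro sum_mono) auto
  also have "\<dots> \<le> 1/4 * ((\<Sum>n\<in>fst ` F. g n) * (\<Sum>n\<in>snd ` F. g n))"
    using sum_le_sum_fst_mult_sum_snd[OF F g g] by simp
  also have "\<dots> \<le> 1/4 * (1 / \<mu> + pi / sqrt \<mu>)\<^sup>2"
    using sum_inverse_add_sq_int_le[OF mu(1), folded g_def] F g mu
    unfolding power2_eq_square by (intro mult_left_mono mult_mono) (auto intro: sum_nonneg)
  also have "\<dots> \<le> 16 / r"
    using inverse_add_pi_div_sqrt_sq_le[OF mu(2)] by (simp add: \<mu>_def)
  finally show ?thesis .
qed

section \<open>Wave numbers and weighted Fourier coefficients\<close>

definition kabs :: "real \<Rightarrow> int \<times> int \<Rightarrow> real" where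
  "kabs L k = norm (kappa L k)"

lemma kabs_nonneg: "kabs L k \<ge> 0"
  unfolding kabs_def by simp

lemma kabs_power2: "(kabs L k)\<^sup>2 = ksq L k"
  unfolding kabs_def ksq_def by (simp add: norm_prod_def)

lemma ksq_nonneg: "ksq L k \<ge> 0"
  unfolding ksq_def by simp

lemma ksq_eq: "ksq L k = (2 * pi / L)\<^sup>2 * ((real_of_int (fst k))\<^sup>2 + (real_of_int (snd k))\<^sup>2)"
  unfolding ksq_def kappa_def by (simp add: power_mult_distrib power_divide algebra_simps add_divide_distrib)

lemma kappa_add: "kappa L k = kappa L p + kappa L (k - p)"
  unfolding kappa_def by (simp add: algebra_simps diff_divide_distrib)

lemma kabs_triangle: "kabs L k \<le> kabs L p + kabs L (k - p)"
  unfolding kabs_def by (subst kappa_add[of L k p]) (rule norm_triangle_ineq)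

lemma one_le_of_int_power2:
  assumes "n \<noteq> 0"
  shows "1 \<le> (real_of_int n)\<^sup>2"
proof -
  have "1 \<le> \<bar>real_of_int n\<bar>" using assms by linarith
  then show ?thesis by (metis power2_abs one_le_power)
qed

lemma ksq_ge:
  assumes "k \<noteq> 0"
  shows "ksq L k \<ge> (2 * pi / L)\<^sup>2"
proof -
  have "fst k \<noteq> 0 \<or> snd k \<noteq> 0" using assms by (simp add: prod_eq_iff)
  then have "1 \<le> (real_of_int (fst k))\<^sup>2 + (real_of_int (snd k))\<^sup>2"
    using one_le_of_int_power2 zero_le_power2 by (metis add.commute add_increasing)
  then show ?thesis unfolding ksq_eq by (simp add: mult_le_cancel_left1)
qed

lemma kabs_ge:
  assumes "k \<noteq> 0" "L > 0"
  shows "kabs L k \<ge> 2 * pi / L"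
proof (rule power2_le_imp_le)
  show "(2 * pi / L)\<^sup>2 \<le> (kabs L k)\<^sup>2" unfolding kabs_power2 by (rule ksq_ge[OF assms(1)])
qed (rule kabs_nonneg)

lemma cnorm2sq_eq: "cnorm2sq a = (norm a)\<^sup>2"
  unfolding cnorm2sq_def norm_prod_def by simp

lemma norm_scal2: "norm (scal2 c a) = cmod c * norm a"
proof -
  have "(norm (scal2 c a))\<^sup>2 = (cmod c * norm a)\<^sup>2"
    unfolding norm_prod_def scal2_def by (simp add: norm_mult power_mult_distrib algebra_simps)
  then show ?thesis by (simp add: power2_eq_iff_nonneg)
qed

lemma norm_Apow: "norm (Apow L \<sigma> u k) = ksq L k powr \<sigma> * norm (u k)"
  unfolding Apow_def norm_scal2 by simp

lemma powr_half_nat: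
  fixes x :: real
  assumes "x \<ge> 0" "m > 0"
  shows "x powr (real m / 2) = sqrt x ^ m"
proof (cases "x = 0")
  case False
  then have "sqrt x ^ m = (x powr (1/2)) powr (real m)"
    using assms by (simp add: powr_half_sqrt powr_realpow)
  then show ?thesis by (simp add: powr_powr)
qed (use assms in simp)

lemma ksq_powr_half: "m > 0 \<Longrightarrow> ksq L k powr (real m / 2) = kabs L k ^ m"
  using powr_half_nat[OF ksq_nonneg] kabs_power2[of L k] kabs_nonneg[of L k]
  by (simp add: real_sqrt_unique)

text \<open>\<open>mode_weight L m f k = |\<kappa>\<^sub>k|\<^sup>m |\<hat>f\<^sub>k|\<close>, so that \<open>L * l2 (mode_weight L m f)\<close> is \<open>|A\<^sup>m\<^sup>/\<^sup>2 f|\<close>.\<close>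
definition mode_weight :: "real \<Rightarrow> nat \<Rightarrow> field2 \<Rightarrow> int \<times> int \<Rightarrow> real" where
  "mode_weight L m f k = kabs L k ^ m * norm (f k)"

lemma mode_weight_nonneg: "mode_weight L m f k \<ge> 0"
  unfolding mode_weight_def using kabs_nonneg by simp

lemma mode_weight_zero: "f 0 = 0 \<Longrightarrow> mode_weight L m f 0 = 0"
  unfolding mode_weight_def by simp

lemma kabs_power_mult_mode_weight: "kabs L k ^ n * mode_weight L m f k = mode_weight L (n + m) f k"
  unfolding mode_weight_def by (simp add: power_add)

lemma ksq_mult_mode_weight: "ksq L k * mode_weight L m f k = mode_weight L (m + 2) f k"
  using kabs_power_mult_mode_weight[of L k 2 m f] by (simp add: kabs_power2 add.commute)

lemma hnorm_eq_l2: "L > 0 \<Longrightarrow> hnorm L f = L * l2 (mode_weight L 0 f)"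
  unfolding hnorm_def l2_def cnorm2sq_eq mode_weight_def
  by (simp add: real_sqrt_mult infsum_nonneg)

lemma hnorm_Apow_eq_l2:
  "L > 0 \<Longrightarrow> m > 0 \<Longrightarrow> hnorm L (Apow L (real m / 2) f) = L * l2 (mode_weight L m f)"
  unfolding hnorm_def l2_def cnorm2sq_eq norm_Apow mode_weight_def
  by (simp add: ksq_powr_half real_sqrt_mult infsum_nonneg)

lemma inD_half_nat:
  assumes "inD L (real m / 2) f" "m > 0"
  shows "f 0 = 0"
    and "(\<lambda>k. (mode_weight L 0 f k)\<^sup>2) summable_on UNIV"
    and "(\<lambda>k. (mode_weight L m f k)\<^sup>2) summable_on UNIV"
  using assms unfolding inD_def inHc_def mode_weight_def cnorm2sq_eq norm_Apow
  by (auto simp: zero_prod_def ksq_powr_half)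

lemma summable_mode_weight_lower:
  assumes L: "L > 0" and f0: "f 0 = 0" and "n \<le> m"
    and summable: "(\<lambda>k. (mode_weight L m f k)\<^sup>2) summable_on UNIV"
  shows "(\<lambda>k. (mode_weight L n f k)\<^sup>2) summable_on UNIV"
proof -
  define c where "c = ((2 * pi / L) ^ (m - n))\<^sup>2"
  have c: "c > 0" using L by (simp add: c_def)
  have "c * (mode_weight L n f k)\<^sup>2 \<le> (mode_weight L m f k)\<^sup>2" for k
  proof (cases "k = 0")
    case False
    have "(2 * pi / L) ^ (m - n) * mode_weight L n f k \<le> kabs L k ^ (m - n) * mode_weight L n f k"
      using kabs_ge[OF False L] L by (intro mult_right_mono power_mono mode_weight_nonneg) auto
    also have "\<dots> = mode_weight L m f k"
      using \<open>n \<le> m\<close> by (simp add: kabs_power_mult_mode_weight)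
    finally show ?thesis
      unfolding c_def power_mult_distrib[symmetric]
      using L by (intro power_mono) (auto intro: mult_nonneg_nonneg mode_weight_nonneg)
  qed (use f0 in \<open>simp add: mode_weight_zero\<close>)
  then show ?thesis
    using c by (intro summable_on_comparison_test[OF summable_on_cmult_left[OF summable, of "1 / c"]])
      (auto simp: field_simps)
qed

section \<open>Agmon's inequality for Fourier coefficients\<close>

lemma L2_set_inverse_add_ksq_le:
  assumes L: "L > 0" and mu: "\<mu> \<ge> (2 * pi / L)\<^sup>2" and F: "finite F"
  shows "L2_set (\<lambda>k. 1 / (\<mu> + ksq L k)) F \<le> 2 * L / (pi * sqrt \<mu>)"
proof -
  define c where "c = 2 * pi / L"
  have c: "c > 0" using L by (simp add: c_def)
  have mu_pos: "\<mu> > 0" using mu c unfolding c_def[symmetric] by (smt (verit) zero_less_power)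
  have "(1 / (\<mu> + ksq L k))\<^sup>2
      = 1 / (\<mu> / c\<^sup>2 + (real_of_int (fst k))\<^sup>2 + (real_of_int (snd k))\<^sup>2)\<^sup>2 / (c\<^sup>2)\<^sup>2" for k
  proof -
    have "\<mu> + ksq L k = c\<^sup>2 * (\<mu> / c\<^sup>2 + (real_of_int (fst k))\<^sup>2 + (real_of_int (snd k))\<^sup>2)"
      unfolding ksq_eq c_def[symmetric] using c by (simp add: field_simps)
    then show ?thesis by (simp add: power_divide power_mult_distrib)
  qed
  then have "(\<Sum>k\<in>F. (1 / (\<mu> + ksq L k))\<^sup>2)
      = (\<Sum>k\<in>F. 1 / (\<mu> / c\<^sup>2 + (real_of_int (fst k))\<^sup>2 + (real_of_int (snd k))\<^sup>2)\<^sup>2) / (c\<^sup>2)\<^sup>2"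
    by (simp add: sum_divide_distrib)
  also have "\<dots> \<le> 16 / (\<mu> / c\<^sup>2) / (c\<^sup>2)\<^sup>2"
    using mu c unfolding c_def[symmetric]
    by (intro divide_right_mono sum_inverse_lattice_sq_le F) (auto simp: field_simps)
  also have "\<dots> = (2 * L / (pi * sqrt \<mu>))\<^sup>2"
    using c mu_pos L unfolding c_def by (simp add: field_simps power2_eq_square)
  finally show ?thesis
    unfolding L2_set_def using L mu_pos by (intro real_le_lsqrt) auto
qed

lemma l2_ksq_mult_ge:
  assumes "f 0 = 0" and "(\<lambda>k. (ksq L k * f k)\<^sup>2) summable_on UNIV"
  shows "(2 * pi / L)\<^sup>2 * l2 f \<le> l2 (\<lambda>k. ksq L k * f k)"
proof -
  have "\<bar>(2 * pi / L)\<^sup>2 * f k\<bar> \<le> \<bar>ksq L k * f k\<bar>" for k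
    using assms(1) ksq_ge[of k L] ksq_nonneg[of L k]
    by (cases "k = 0") (auto simp: abs_mult intro!: mult_right_mono)
  then show ?thesis
    by (subst l2_cmult[symmetric]) (auto intro: l2_mono[OF _ assms(2)])
qed

lemma finite_sum_le_weighted_l2:
  fixes f :: "int \<times> int \<Rightarrow> real"
  assumes L: "L > 0" and mu: "\<mu> \<ge> (2 * pi / L)\<^sup>2" and F: "finite F" and nonneg: "\<And>k. f k \<ge> 0"
    and summable_f: "(\<lambda>k. (f k)\<^sup>2) summable_on UNIV"
    and summable_Af: "(\<lambda>k. (ksq L k * f k)\<^sup>2) summable_on UNIV"
  shows "sum f F \<le> (\<mu> * l2 f + l2 (\<lambda>k. ksq L k * f k)) * (2 * L / (pi * sqrt \<mu>))"
proof -
  have mu_pos: "\<mu> > 0" using mu L by (smt (verit) zero_less_power divide_pos_pos pi_gt_zero)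
  have "f k = ((\<mu> + ksq L k) * f k) * (1 / (\<mu> + ksq L k))" for k
    using mu_pos ksq_nonneg[of L k] by simp
  then have "sum f F = (\<Sum>k\<in>F. ((\<mu> + ksq L k) * f k) * (1 / (\<mu> + ksq L k)))"
    by (rule sum.cong[OF refl])
  also have "\<dots> \<le> L2_set (\<lambda>k. (\<mu> + ksq L k) * f k) F * L2_set (\<lambda>k. 1 / (\<mu> + ksq L k)) F"
    using mu_pos ksq_nonneg nonneg by (intro finite_sum_mult_le_L2_set) (auto intro: add_nonneg_nonneg)
  also have "\<dots> \<le> (\<mu> * l2 f + l2 (\<lambda>k. ksq L k * f k)) * (2 * L / (pi * sqrt \<mu>))"
  proof (intro mult_mono L2_set_inverse_add_ksq_le[OF L mu F])
    have "L2_set (\<lambda>k. (\<mu> + ksq L k) * f k) F \<le> L2_set (\<lambda>k. \<mu> * f k) F + L2_set (\<lambda>k. ksq L k * f k) F"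
      unfolding distrib_right by (rule L2_set_triangle_ineq)
    also have "\<dots> \<le> \<mu> * l2 f + l2 (\<lambda>k. ksq L k * f k)"
      unfolding L2_set_right_distrib[OF less_imp_le[OF mu_pos], symmetric]
      using mu_pos by (intro add_mono mult_left_mono L2_set_le_l2 summable_f summable_Af) auto
    finally show "L2_set (\<lambda>k. (\<mu> + ksq L k) * f k) F \<le> \<mu> * l2 f + l2 (\<lambda>k. ksq L k * f k)" .
  qed (use mu_pos in \<open>auto simp: l2_nonneg\<close>)
  finally show ?thesis .
qed

text \<open>The weight \<open>\<mu> = |Af|/|f|\<close> balances the two terms of the previous bound.\<close>
lemma Agmon_l1_bound:
  fixes f :: "int \<times> int \<Rightarrow> real"
  assumes L: "L > 0" and nonneg: "\<And>k. f k \<ge> 0" and f0: "f 0 = 0"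
    and summable_f: "(\<lambda>k. (f k)\<^sup>2) summable_on UNIV"
    and summable_Af: "(\<lambda>k. (ksq L k * f k)\<^sup>2) summable_on UNIV"
  shows "f summable_on UNIV"
    and "infsum f UNIV \<le> 4 / pi * L * sqrt (l2 f) * sqrt (l2 (\<lambda>k. ksq L k * f k))"
proof -
  define A where "A = l2 f"
  define B where "B = l2 (\<lambda>k. ksq L k * f k)"
  have AB: "A \<ge> 0" "B \<ge> 0" unfolding A_def B_def by (auto simp: l2_nonneg)
  have finite_sums: "sum f F \<le> 4 / pi * L * sqrt A * sqrt B" if F: "finite F" for F
  proof (cases "A = 0")
    case True
    then have "f k = 0" for k using le_l2[OF summable_f, of k] nonneg[of k] unfolding A_def by simp
    then show ?thesis using True by simp
  next
    case False
    define \<mu> where "\<mu> = B / A"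
    have A_pos: "A > 0" using False AB by simp
    have "(2 * pi / L)\<^sup>2 * A \<le> B"
      unfolding A_def B_def by (rule l2_ksq_mult_ge[OF f0 summable_Af])
    then have mu: "\<mu> \<ge> (2 * pi / L)\<^sup>2" using A_pos unfolding \<mu>_def by (simp add: field_simps)
    then have mu_pos: "\<mu> > 0" using L by (smt (verit) zero_less_power divide_pos_pos pi_gt_zero)
    have balance: "\<mu> * A + B = 2 * B" using A_pos unfolding \<mu>_def by simp
    have root_mu: "sqrt \<mu> * sqrt A = sqrt B"
      using A_pos unfolding \<mu>_def real_sqrt_mult[symmetric] by simp
    have "sqrt B * sqrt B / sqrt \<mu> = sqrt A * sqrt B"
      unfolding root_mu[symmetric] using mu_pos by simp
    then have root: "B / sqrt \<mu> = sqrt A * sqrt B" using AB by simp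
    have "sum f F \<le> (\<mu> * A + B) * (2 * L / (pi * sqrt \<mu>))"
      unfolding A_def B_def
      by (rule finite_sum_le_weighted_l2[OF L mu[unfolded A_def B_def] F nonneg summable_f summable_Af])
    also have "\<dots> = 4 / pi * L * (B / sqrt \<mu>)" unfolding balance by simp
    finally show ?thesis unfolding root by (simp add: mult.assoc)
  qed
  show "f summable_on UNIV"
    by (rule nonneg_summable_on_infsum_le(1)[OF nonneg finite_sums])
  show "infsum f UNIV \<le> 4 / pi * L * sqrt (l2 f) * sqrt (l2 (\<lambda>k. ksq L k * f k))"
    using nonneg_summable_on_infsum_le(2)[OF nonneg finite_sums] unfolding A_def B_def .
qed

section \<open>Mode-wise bounds on the nonlinearity\<close>

lemma cmod_mult_add_mult_le: "cmod (x1 * y1 + x2 * y2) \<le> norm (x1, x2) * norm (y1, y2)"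
proof -
  have "cmod (x1 * y1 + x2 * y2) \<le> (cmod x1, cmod x2) \<bullet> (cmod y1, cmod y2)"
    using norm_triangle_ineq[of "x1 * y1" "x2 * y2"] by (simp add: norm_mult)
  also have "\<dots> \<le> norm (cmod x1, cmod x2) * norm (cmod y1, cmod y2)"
    by (rule norm_cauchy_schwarz)
  finally show ?thesis by (simp add: norm_Pair)
qed

lemma cmod_kdot_le: "cmod (kdot \<kappa> a) \<le> norm \<kappa> * norm a"
  using cmod_mult_add_mult_le[of "of_real (fst \<kappa>)" "fst a" "of_real (snd \<kappa>)" "snd a"]
  unfolding kdot_def norm_prod_def by simp

lemma cmod_cinner2_le: "cmod (cinner2 a b) \<le> norm a * norm b"
  using cmod_mult_add_mult_le[of "fst a" "cnj (fst b)" "snd a" "cnj (snd b)"]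
  unfolding cinner2_def norm_prod_def by simp

lemma norm_Pair_power2: "(norm (p, q))\<^sup>2 = (norm p)\<^sup>2 + (norm q)\<^sup>2"
  by (simp add: norm_Pair)

text \<open>Pythagoras for the projection of \<open>a \<in> \<complex>\<^sup>2\<close> orthogonally to the real vector \<open>(x, y)\<close>.\<close>
lemma norm_orthogonal_projection_power2:
  fixes a1 a2 :: complex and x y :: real
  assumes "x\<^sup>2 + y\<^sup>2 \<noteq> 0"
  defines "d \<equiv> of_real x * a1 + of_real y * a2" and "s \<equiv> complex_of_real (x\<^sup>2 + y\<^sup>2)"
  shows "(norm (a1 - d / s * x, a2 - d / s * y))\<^sup>2 = (norm (a1, a2))\<^sup>2 - (cmod d)\<^sup>2 / (x\<^sup>2 + y\<^sup>2)"
proof -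
  have s0: "s \<noteq> 0" using assms(1) unfolding s_def of_real_eq_0_iff by (simp del: of_real_add of_real_power)
  have cs: "cnj s = s" unfolding s_def by simp
  have cd: "cnj d = of_real x * cnj a1 + of_real y * cnj a2" unfolding d_def by simp
  have ss: "s = of_real x * of_real x + of_real y * of_real y" unfolding s_def by (simp add: power2_eq_square)
  have "(a1 - d / s * x) * cnj (a1 - d / s * x) + (a2 - d / s * y) * cnj (a2 - d / s * y)
     = a1 * cnj a1 + a2 * cnj a2 - d * cnj d / s"
    unfolding complex_cnj_diff complex_cnj_mult complex_cnj_divide cs complex_cnj_complex_of_real cd
    using s0 unfolding d_def by (simp add: field_simps) (simp add: ss algebra_simps power2_eq_square)
  then have "complex_of_real ((norm (a1 - d / s * x, a2 - d / s * y))\<^sup>2)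
      = complex_of_real ((norm (a1, a2))\<^sup>2 - (cmod d)\<^sup>2 / (x\<^sup>2 + y\<^sup>2))"
    unfolding norm_Pair_power2 of_real_diff of_real_divide of_real_add complex_norm_square
    by (simp add: s_def)
  then show ?thesis by (rule of_real_eq_iff[THEN iffD1])
qed

lemma norm_leray_le: "norm (leray L k a) \<le> norm a"
proof (cases "k = (0, 0) \<or> ksq L k = 0")
  case True
  then show ?thesis unfolding leray_def by auto
next
  case False
  obtain x y where xy: "kappa L k = (x, y)" by fastforce
  have s: "ksq L k = x\<^sup>2 + y\<^sup>2" unfolding ksq_def xy by simp
  have "leray L k (fst a, snd a) = (fst a - kdot (x, y) a / of_real (x\<^sup>2 + y\<^sup>2) * of_real x,
      snd a - kdot (x, y) a / of_real (x\<^sup>2 + y\<^sup>2) * of_real y)"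
    using False unfolding leray_def xy s by simp
  then have "(norm (leray L k a))\<^sup>2 = (norm a)\<^sup>2 - (cmod (kdot (x, y) a))\<^sup>2 / (x\<^sup>2 + y\<^sup>2)"
    using norm_orthogonal_projection_power2[of x y "fst a" "snd a"] False s by (simp add: kdot_def)
  also have "\<dots> \<le> (norm a)\<^sup>2" by simp
  finally show ?thesis by (simp add: power2_le_iff_abs_le)
qed

lemma Bop_eq:
  "Bop L u v k = leray L k (\<Sum>\<^sub>\<infinity>p. scal2 (\<i> * kdot (kappa L (k - p)) (u p)) (v (k - p)))"
proof -
  have "(fst k - fst p, snd k - snd p) = k - p" for p :: "int \<times> int" by (simp add: prod_eq_iff)
  then show ?thesis unfolding Bop_def by simp
qed

lemma norm_Bop_summand_le:
  "norm (scal2 (\<i> * kdot (kappa L (k - p)) (u p)) (v (k - p))) \<le> mode_weight L 0 u p * mode_weight L 1 v (k - p)"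
proof -
  have "norm (scal2 (\<i> * kdot (kappa L (k - p)) (u p)) (v (k - p)))
      = cmod (kdot (kappa L (k - p)) (u p)) * norm (v (k - p))"
    by (simp add: norm_scal2 norm_mult)
  also have "\<dots> \<le> norm (kappa L (k - p)) * norm (u p) * norm (v (k - p))"
    by (intro mult_right_mono cmod_kdot_le) simp
  finally show ?thesis by (simp add: mode_weight_def kabs_def mult_ac)
qed

lemma norm_Bop_le_dconv:
  assumes "(\<lambda>p. mode_weight L 0 u p * mode_weight L 1 v (k - p)) summable_on UNIV"
  shows "norm (Bop L u v k) \<le> dconv (mode_weight L 0 u) (mode_weight L 1 v) k"
proof -
  have summable: "(\<lambda>p. norm (scal2 (\<i> * kdot (kappa L (k - p)) (u p)) (v (k - p)))) summable_on UNIV"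
    by (rule summable_on_comparison_test[OF assms]) (use norm_Bop_summand_le in auto)
  have "norm (Bop L u v k) \<le> norm (\<Sum>\<^sub>\<infinity>p. scal2 (\<i> * kdot (kappa L (k - p)) (u p)) (v (k - p)))"
    unfolding Bop_eq by (rule norm_leray_le)
  also have "\<dots> \<le> (\<Sum>\<^sub>\<infinity>p. norm (scal2 (\<i> * kdot (kappa L (k - p)) (u p)) (v (k - p))))"
    using summable by (intro norm_infsum_bound) simp
  also have "\<dots> \<le> dconv (mode_weight L 0 u) (mode_weight L 1 v) k"
    unfolding dconv_def by (intro infsum_mono[OF summable assms] norm_Bop_summand_le)
  finally show ?thesis .
qed

section \<open>A lower bound for the Agmon constant\<close>

lemma has_sum_finite_support:
  fixes f :: "'a \<Rightarrow> 'b::{topological_comm_monoid_add, t2_space}"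
  assumes "finite S" "\<And>x. x \<notin> S \<Longrightarrow> f x = 0"
  shows "(f has_sum sum f S) UNIV"
  by (rule has_sum_finite_neutralI) (use assms in auto)

text \<open>The real field \<open>x \<mapsto> (0, 2 cos (2 \<pi> x\<^sub>1 / L))\<close>, whose sup norm \<open>2\<close> is attained at the origin.\<close>
definition cos_mode :: field2 where
  "cos_mode k = (if k = (1, 0) \<or> k = (-1, 0) then (0, 1) else (0, 0))"

lemma cos_mode_support: "k \<notin> {(1, 0), (-1, 0)} \<Longrightarrow> cos_mode k = (0, 0)"
  unfolding cos_mode_def by auto

lemma has_sum_cnorm2sq_cos_mode: "((\<lambda>k. cnorm2sq (cos_mode k)) has_sum 2) UNIV"
  using has_sum_finite_support[of "{(1, 0), (-1, 0)}" "\<lambda>k. cnorm2sq (cos_mode k)"]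
  by (simp add: cos_mode_support cnorm2sq_def cos_mode_def)

lemma has_sum_cnorm2sq_Apow_cos_mode:
  "((\<lambda>k. cnorm2sq (Apow L 1 cos_mode k)) has_sum 2 * ((2 * pi / L)\<^sup>2)\<^sup>2) UNIV"
proof -
  have "ksq L (1, 0) = (2 * pi / L)\<^sup>2" "ksq L (-1, 0) = (2 * pi / L)\<^sup>2"
    unfolding ksq_eq by simp_all
  then show ?thesis
    using has_sum_finite_support[of "{(1, 0), (-1, 0)}" "\<lambda>k. cnorm2sq (Apow L 1 cos_mode k)"]
    by (simp add: cos_mode_support cnorm2sq_def cos_mode_def Apow_def scal2_def)
qed

lemma hnorm_cos_mode: "L > 0 \<Longrightarrow> hnorm L cos_mode = sqrt 2 * L"
  using has_sum_cnorm2sq_cos_mode by (simp add: hnorm_def has_sum_iff real_sqrt_mult)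

lemma hnorm_Apow_cos_mode:
  assumes "L > 0"
  shows "hnorm L (Apow L 1 cos_mode) = sqrt 2 * L * (2 * pi / L)\<^sup>2"
proof -
  have "hnorm L (Apow L 1 cos_mode) = sqrt ((sqrt 2 * L * (2 * pi / L)\<^sup>2)\<^sup>2)"
    using has_sum_cnorm2sq_Apow_cos_mode[of L] unfolding hnorm_def has_sum_iff
    by (simp add: power_mult_distrib)
  then show ?thesis using assms by simp
qed

lemma inD_cos_mode: "inD L 1 cos_mode"
  using has_sum_cnorm2sq_cos_mode has_sum_cnorm2sq_Apow_cos_mode
  unfolding inD_def inHc_def has_sum_iff
  by (auto simp: cos_mode_def kdot_def kappa_def)

lemma realH_cos_mode: "realH cos_mode"
  unfolding realH_def cos_mode_def by (auto simp: prod_eq_iff)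

lemma Linf_cos_mode: "Linf L cos_mode \<ge> 2"
proof -
  define e where "e x k = scal2 (cis (fst (kappa L k) * fst x + snd (kappa L k) * snd x)) (cos_mode k)" for x k
  have evalF: "evalF L cos_mode x = sum (e x) {(1, 0), (-1, 0)}" for x
    unfolding evalF_def e_def[symmetric]
    by (rule infsumI, rule has_sum_finite_support) (auto simp: e_def cos_mode_support scal2_def zero_prod_def)
  have "norm (evalF L cos_mode x) \<le> 2" for x
  proof -
    have "norm (evalF L cos_mode x) \<le> (\<Sum>k\<in>{(1, 0), (-1, 0)}. norm (e x k))"
      unfolding evalF by (rule norm_sum)
    also have "\<dots> = 2" by (simp add: e_def norm_scal2 cos_mode_def)
    finally show ?thesis .
  qed
  moreover have "norm (evalF L cos_mode (0, 0)) = 2"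
    unfolding evalF by (simp add: e_def scal2_def cos_mode_def)
  ultimately show ?thesis
    unfolding Linf_def by (metis UNIV_I bdd_aboveI2 cSUP_upper)
qed

lemma Agmon_constant_ge:
  assumes L: "L > 0"
    and agmon: "\<forall>z. inD L 1 z \<and> realH z \<longrightarrow>
                   Linf L z \<le> cA * sqrt (hnorm L z) * sqrt (hnorm L (Apow L 1 z))"
  shows "cA \<ge> 1 / (sqrt 2 * pi)"
proof -
  have "hnorm L cos_mode * hnorm L (Apow L 1 cos_mode) = (sqrt 2 * 2 * pi)\<^sup>2"
    using L by (simp add: hnorm_cos_mode hnorm_Apow_cos_mode power2_eq_square field_simps)
  then have "sqrt (hnorm L cos_mode) * sqrt (hnorm L (Apow L 1 cos_mode)) = sqrt 2 * 2 * pi"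
    by (simp add: real_sqrt_mult[symmetric])
  then have "2 \<le> cA * (sqrt 2 * 2 * pi)"
    using Linf_cos_mode[of L] agmon inD_cos_mode realH_cos_mode by (fastforce simp: mult.assoc)
  then show ?thesis by (simp add: field_simps)
qed

section \<open>The trilinear estimate\<close>

lemma power_add_le_two_power:
  fixes a b :: real
  assumes "a \<ge> 0" "b \<ge> 0" "n \<ge> 1"
  shows "(a + b) ^ n \<le> 2 ^ (n - 1) * (a ^ n + b ^ n)"
  using assms(3)
proof (induction n rule: dec_induct)
  case (step n)
  have "0 \<le> (a - b) * (a ^ n - b ^ n)"
  proof (cases "a \<le> b")
    case True
    then have "a ^ n \<le> b ^ n" using assms by (intro power_mono) auto
    then show ?thesis using True by (intro mult_nonpos_nonpos) auto
  next
    case False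
    then have "b ^ n \<le> a ^ n" using assms by (intro power_mono) auto
    then show ?thesis using False by (intro mult_nonneg_nonneg) auto
  qed
  then have Chebyshev: "(a + b) * (a ^ n + b ^ n) \<le> 2 * (a ^ Suc n + b ^ Suc n)"
    by (simp add: algebra_simps)
  have "(a + b) ^ Suc n \<le> (a + b) * (2 ^ (n - 1) * (a ^ n + b ^ n))"
    using step.IH assms by (simp add: mult_left_mono)
  also have "\<dots> \<le> 2 ^ (n - 1) * (2 * (a ^ Suc n + b ^ Suc n))"
    using Chebyshev by (simp add: mult.left_commute)
  also have "\<dots> = 2 ^ (Suc n - 1) * (a ^ Suc n + b ^ Suc n)"
    using step.hyps by (cases n) auto
  finally show ?case .
qed simp

lemma kabs_power_le:
  assumes "n \<ge> 1"
  shows "kabs L k ^ n \<le> 2 ^ (n - 1) * (kabs L p ^ n + kabs L (k - p) ^ n)"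
proof -
  have "kabs L k ^ n \<le> (kabs L p + kabs L (k - p)) ^ n"
    by (rule power_mono[OF kabs_triangle kabs_nonneg])
  also have "\<dots> \<le> 2 ^ (n - 1) * (kabs L p ^ n + kabs L (k - p) ^ n)"
    by (rule power_add_le_two_power[OF kabs_nonneg kabs_nonneg assms])
  finally show ?thesis .
qed

lemma norm_Apow_nat:
  assumes "n > 0"
  shows "norm (Apow L (real n) w k) = kabs L k ^ n * mode_weight L n w k"
proof -
  have "ksq L k powr real n = kabs L k ^ (2 * n)"
    using ksq_powr_half[of "2 * n" L k] assms by simp
  then show ?thesis
    unfolding norm_Apow mode_weight_def by (simp add: mult_2 power_add)
qed

text \<open>The Leibniz rule on the Fourier side: \<open>|\<kappa>\<^sub>k|\<^sup>n\<close> is distributed over the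
  two factors of the convolution.\<close>
lemma kabs_power_mult_dconv_le:
  assumes "n \<ge> 1"
    and summable_low: "(\<lambda>p. mode_weight L 0 u p * mode_weight L 1 v (k - p)) summable_on UNIV"
    and summable_v: "(\<lambda>p. mode_weight L 0 u p * mode_weight L (n + 1) v (k - p)) summable_on UNIV"
    and summable_u: "(\<lambda>p. mode_weight L n u p * mode_weight L 1 v (k - p)) summable_on UNIV"
  shows "kabs L k ^ n * dconv (mode_weight L 0 u) (mode_weight L 1 v) k
    \<le> 2 ^ (n - 1) * (dconv (mode_weight L 0 u) (mode_weight L (n + 1) v) k
                    + dconv (mode_weight L n u) (mode_weight L 1 v) k)"
proof -
  have "kabs L k ^ n * (mode_weight L 0 u p * mode_weight L 1 v (k - p))
      \<le> 2 ^ (n - 1) * (mode_weight L 0 u p * mode_weight L (n + 1) v (k - p)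
                       + mode_weight L n u p * mode_weight L 1 v (k - p))" for p
  proof -
    have "kabs L k ^ n * (mode_weight L 0 u p * mode_weight L 1 v (k - p))
        \<le> 2 ^ (n - 1) * (kabs L p ^ n + kabs L (k - p) ^ n) * (mode_weight L 0 u p * mode_weight L 1 v (k - p))"
      using kabs_power_le[OF assms(1)] by (intro mult_right_mono) (auto intro: mult_nonneg_nonneg mode_weight_nonneg)
    also have "\<dots> = 2 ^ (n - 1) * (mode_weight L 0 u p * (kabs L (k - p) ^ n * mode_weight L 1 v (k - p))
                       + (kabs L p ^ n * mode_weight L 0 u p) * mode_weight L 1 v (k - p))"
      by (simp add: algebra_simps)
    finally show ?thesis by (simp add: kabs_power_mult_mode_weight)
  qed
  then have "(\<Sum>\<^sub>\<infinity>p. kabs L k ^ n * (mode_weight L 0 u p * mode_weight L 1 v (k - p)))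
      \<le> (\<Sum>\<^sub>\<infinity>p. 2 ^ (n - 1) * (mode_weight L 0 u p * mode_weight L (n + 1) v (k - p)
                       + mode_weight L n u p * mode_weight L 1 v (k - p)))"
    using summable_low summable_v summable_u
    by (intro infsum_mono summable_on_cmult_right summable_on_add)
  then show ?thesis
    unfolding dconv_def infsum_cmult_right' infsum_add[OF summable_v summable_u] .
qed

lemma infsum_cmod_cinner2_Bop_le:
  fixes n :: nat
  assumes n: "n \<ge> 1"
    and u_l1: "mode_weight L 0 u summable_on UNIV"
    and v_l1: "mode_weight L 1 v summable_on UNIV"
    and v_low: "(\<lambda>k. (mode_weight L 1 v k)\<^sup>2) summable_on UNIV"
    and v: "(\<lambda>k. (mode_weight L (n + 1) v k)\<^sup>2) summable_on UNIV"
    and u: "(\<lambda>k. (mode_weight L n u k)\<^sup>2) summable_on UNIV"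
    and w: "(\<lambda>k. (mode_weight L n w k)\<^sup>2) summable_on UNIV"
  shows "(\<lambda>k. cmod (cinner2 (Bop L u v k) (Apow L (real n) w k))) summable_on UNIV"
    and "(\<Sum>\<^sub>\<infinity>k. cmod (cinner2 (Bop L u v k) (Apow L (real n) w k)))
      \<le> 2 ^ (n - 1) * (infsum (mode_weight L 0 u) UNIV * l2 (mode_weight L (n + 1) v) * l2 (mode_weight L n w)
                      + infsum (mode_weight L 1 v) UNIV * l2 (mode_weight L n u) * l2 (mode_weight L n w))"
proof -
  define T1 where "T1 k = dconv (mode_weight L 0 u) (mode_weight L (n + 1) v) k * mode_weight L n w k" for k
  define T2 where "T2 k = dconv (mode_weight L 1 v) (mode_weight L n u) k * mode_weight L n w k" for k
  note nonneg = mode_weight_nonneg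
  have mode: "cmod (cinner2 (Bop L u v k) (Apow L (real n) w k)) \<le> 2 ^ (n - 1) * (T1 k + T2 k)" for k
  proof -
    have "cmod (cinner2 (Bop L u v k) (Apow L (real n) w k)) \<le> norm (Bop L u v k) * (kabs L k ^ n * mode_weight L n w k)"
      using cmod_cinner2_le norm_Apow_nat n by (metis less_le_trans zero_less_one)
    also have "\<dots> \<le> (kabs L k ^ n * dconv (mode_weight L 0 u) (mode_weight L 1 v) k) * mode_weight L n w k"
      using norm_Bop_le_dconv[OF summable_on_dconv_summands[OF u_l1 nonneg nonneg v_low]]
      by (simp add: mult_ac mult_left_mono mult_right_mono kabs_nonneg nonneg)
    also have "\<dots> \<le> 2 ^ (n - 1) * (dconv (mode_weight L 0 u) (mode_weight L (n + 1) v) k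
                    + dconv (mode_weight L n u) (mode_weight L 1 v) k) * mode_weight L n w k"
      by (intro mult_right_mono kabs_power_mult_dconv_le n summable_on_dconv_summands
          summable_on_dconv_summands_swap u_l1 v_l1 v_low v u nonneg)
    finally show ?thesis by (simp add: T1_def T2_def dconv_commute algebra_simps)
  qed
  note Young1 = Young_dconv[OF u_l1 nonneg v nonneg w nonneg, folded T1_def]
  note Young2 = Young_dconv[OF v_l1 nonneg u nonneg w nonneg, folded T2_def]
  have majorant: "(\<lambda>k. 2 ^ (n - 1) * (T1 k + T2 k)) summable_on UNIV"
    using Young1(1) Young2(1) by (intro summable_on_cmult_right summable_on_add)
  show summable: "(\<lambda>k. cmod (cinner2 (Bop L u v k) (Apow L (real n) w k))) summable_on UNIV"
    by (rule summable_on_comparison_test[OF majorant]) (use mode in auto)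
  have "(\<Sum>\<^sub>\<infinity>k. cmod (cinner2 (Bop L u v k) (Apow L (real n) w k))) \<le> (\<Sum>\<^sub>\<infinity>k. 2 ^ (n - 1) * (T1 k + T2 k))"
    by (rule infsum_mono[OF summable majorant mode])
  also have "\<dots> = 2 ^ (n - 1) * (infsum T1 UNIV + infsum T2 UNIV)"
    by (simp add: infsum_cmult_right' infsum_add[OF Young1(1) Young2(1)])
  also have "\<dots> \<le> 2 ^ (n - 1) * (infsum (mode_weight L 0 u) UNIV * l2 (mode_weight L (n + 1) v) * l2 (mode_weight L n w)
                      + infsum (mode_weight L 1 v) UNIV * l2 (mode_weight L n u) * l2 (mode_weight L n w))"
    using Young1(2) Young2(2) by (intro mult_left_mono add_mono) auto
  finally show "(\<Sum>\<^sub>\<infinity>k. cmod (cinner2 (Bop L u v k) (Apow L (real n) w k)))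
      \<le> 2 ^ (n - 1) * (infsum (mode_weight L 0 u) UNIV * l2 (mode_weight L (n + 1) v) * l2 (mode_weight L n w)
                      + infsum (mode_weight L 1 v) UNIV * l2 (mode_weight L n u) * l2 (mode_weight L n w))" .
qed

lemma Agmon_mode_weight:
  assumes L: "L > 0" and f0: "f 0 = 0"
    and low: "(\<lambda>k. (mode_weight L m f k)\<^sup>2) summable_on UNIV"
    and high: "(\<lambda>k. (mode_weight L (m + 2) f k)\<^sup>2) summable_on UNIV"
  shows "mode_weight L m f summable_on UNIV"
    and "infsum (mode_weight L m f) UNIV
      \<le> 4 / pi * L * sqrt (l2 (mode_weight L m f)) * sqrt (l2 (mode_weight L (m + 2) f))"
  using Agmon_l1_bound[OF L mode_weight_nonneg mode_weight_zero[of f, OF f0] low]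
    high unfolding ksq_mult_mode_weight by auto

lemma cmod_hinner_le:
  assumes "(\<lambda>k. cmod (cinner2 (f k) (g k))) summable_on UNIV"
  shows "cmod (hinner L f g) \<le> L\<^sup>2 * (\<Sum>\<^sub>\<infinity>k. cmod (cinner2 (f k) (g k)))"
  unfolding hinner_def norm_mult
  by (intro mult_mono norm_infsum_bound) (use assms in \<open>auto simp: infsum_nonneg norm_power\<close>)

lemma cmod_hinner_Bop_le_l2:
  fixes n :: nat
  assumes L: "L > 0" and n: "n \<ge> 1" and u0: "u 0 = 0" and v0: "v 0 = 0"
    and u_low: "(\<lambda>k. (mode_weight L 0 u k)\<^sup>2) summable_on UNIV"
    and u2: "(\<lambda>k. (mode_weight L 2 u k)\<^sup>2) summable_on UNIV"
    and u: "(\<lambda>k. (mode_weight L n u k)\<^sup>2) summable_on UNIV"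
    and v1: "(\<lambda>k. (mode_weight L 1 v k)\<^sup>2) summable_on UNIV"
    and v3: "(\<lambda>k. (mode_weight L 3 v k)\<^sup>2) summable_on UNIV"
    and v: "(\<lambda>k. (mode_weight L (n + 1) v k)\<^sup>2) summable_on UNIV"
    and w: "(\<lambda>k. (mode_weight L n w k)\<^sup>2) summable_on UNIV"
  shows "cmod (hinner L (Bop L u v) (Apow L (real n) w))
    \<le> 2 ^ (n - 1) * (4 / pi) * L ^ 3 *
       (sqrt (l2 (mode_weight L 0 u)) * sqrt (l2 (mode_weight L 2 u)) * l2 (mode_weight L (n + 1) v)
        + l2 (mode_weight L n u) * sqrt (l2 (mode_weight L 1 v)) * sqrt (l2 (mode_weight L 3 v)))
       * l2 (mode_weight L n w)"
proof -
  have "(0::nat) + 2 = 2" "(1::nat) + 2 = 3" by simp_all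
  note Agmon_u = Agmon_mode_weight[of L u 0, unfolded this, OF L u0 u_low u2]
    and Agmon_v = Agmon_mode_weight[of L v 1, unfolded this, OF L v0 v1 v3]
  note trilinear = infsum_cmod_cinner2_Bop_le[OF n Agmon_u(1) Agmon_v(1) v1 v u w]
  have "cmod (hinner L (Bop L u v) (Apow L (real n) w))
      \<le> L\<^sup>2 * (\<Sum>\<^sub>\<infinity>k. cmod (cinner2 (Bop L u v k) (Apow L (real n) w k)))"
    by (rule cmod_hinner_le[OF trilinear(1)])
  also have "\<dots> \<le> L\<^sup>2 * (2 ^ (n - 1) *
      ((4 / pi * L * sqrt (l2 (mode_weight L 0 u)) * sqrt (l2 (mode_weight L 2 u)))
         * l2 (mode_weight L (n + 1) v) * l2 (mode_weight L n w)
       + (4 / pi * L * sqrt (l2 (mode_weight L 1 v)) * sqrt (l2 (mode_weight L 3 v)))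
         * l2 (mode_weight L n u) * l2 (mode_weight L n w)))"
    using trilinear(2) Agmon_u(2) Agmon_v(2)
    by (intro mult_left_mono order_trans[OF trilinear(2)] add_mono mult_right_mono)
      (auto simp: l2_nonneg)
  also have "\<dots> = 2 ^ (n - 1) * (4 / pi) * L ^ 3 *
       (sqrt (l2 (mode_weight L 0 u)) * sqrt (l2 (mode_weight L 2 u)) * l2 (mode_weight L (n + 1) v)
        + l2 (mode_weight L n u) * sqrt (l2 (mode_weight L 1 v)) * sqrt (l2 (mode_weight L 3 v)))
       * l2 (mode_weight L n w)"
    by (simp add: power3_eq_cube power2_eq_square distrib_left distrib_right mult_ac)
  finally show ?thesis .
qed

lemma cmod_hinner_Bop_le:
  fixes n :: nat
  assumes L: "L > 0" and n: "n \<ge> 2"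
    and u: "inD L (real n / 2) u"
    and v: "inD L ((real n + 1) / 2) v"
    and w: "inD L (real n) w"
  shows "cmod (hinner L (Bop L u v) (Apow L (real n) w))
    \<le> 2 ^ (n - 1) * (4 / pi) *
       (sqrt (hnorm L u) * sqrt (hnorm L (Apow L 1 u)) * hnorm L (Apow L ((1 + real n) / 2) v)
        + hnorm L (Apow L (real n / 2) u) * sqrt (hnorm L (Apow L (1/2) v))
          * sqrt (hnorm L (Apow L (3/2) v)))
       * hnorm L (Apow L (real n / 2) w)"
proof -
  have n_pos: "n > 0" "n \<ge> 1" "n + 1 > 0" "2 * n > 0" using n by auto
  have "inD L (real (n + 1) / 2) v" "inD L (real (2 * n) / 2) w"
    using v w by (simp_all add: add.commute)
  note u' = inD_half_nat[OF u n_pos(1)] and v' = inD_half_nat[OF this(1) n_pos(3)]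
    and w' = inD_half_nat[OF this(2) n_pos(4)]
  note lower = summable_mode_weight_lower[OF L]
  have u2: "(\<lambda>k. (mode_weight L 2 u k)\<^sup>2) summable_on UNIV" by (rule lower[OF u'(1) n u'(3)])
  have v1: "(\<lambda>k. (mode_weight L 1 v k)\<^sup>2) summable_on UNIV" by (rule lower[OF v'(1) _ v'(3)]) simp
  have v3: "(\<lambda>k. (mode_weight L 3 v k)\<^sup>2) summable_on UNIV" by (rule lower[OF v'(1) _ v'(3)]) (use n in simp)
  have wn: "(\<lambda>k. (mode_weight L n w k)\<^sup>2) summable_on UNIV" by (rule lower[OF w'(1) _ w'(3)]) simp
  have "cmod (hinner L (Bop L u v) (Apow L (real n) w))
    \<le> 2 ^ (n - 1) * (4 / pi) * L ^ 3 *
       (sqrt (l2 (mode_weight L 0 u)) * sqrt (l2 (mode_weight L 2 u)) * l2 (mode_weight L (n + 1) v)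
        + l2 (mode_weight L n u) * sqrt (l2 (mode_weight L 1 v)) * sqrt (l2 (mode_weight L 3 v)))
       * l2 (mode_weight L n w)"
    by (rule cmod_hinner_Bop_le_l2[OF L n_pos(2) u'(1) v'(1) u'(2) u2 u'(3) v1 v3 v'(3) wn])
  also have "\<dots> = 2 ^ (n - 1) * (4 / pi) *
       (sqrt (L * l2 (mode_weight L 0 u)) * sqrt (L * l2 (mode_weight L 2 u)) * (L * l2 (mode_weight L (n + 1) v))
        + (L * l2 (mode_weight L n u)) * sqrt (L * l2 (mode_weight L 1 v)) * sqrt (L * l2 (mode_weight L 3 v)))
       * (L * l2 (mode_weight L n w))"
  proof -
    have sqrt_L: "sqrt L * (sqrt L * z) = L * z" for z using L by (simp add: mult.assoc[symmetric])
    show ?thesis by (simp add: sqrt_L real_sqrt_mult algebra_simps power3_eq_cube)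
  qed
  also have "\<dots> = 2 ^ (n - 1) * (4 / pi) *
       (sqrt (hnorm L u) * sqrt (hnorm L (Apow L 1 u)) * hnorm L (Apow L ((1 + real n) / 2) v)
        + hnorm L (Apow L (real n / 2) u) * sqrt (hnorm L (Apow L (1/2) v))
          * sqrt (hnorm L (Apow L (3/2) v)))
       * hnorm L (Apow L (real n / 2) w)"
    using hnorm_eq_l2[OF L, of u] hnorm_Apow_eq_l2[OF L, of 2 u] hnorm_Apow_eq_l2[OF L, of "n + 1" v]
      hnorm_Apow_eq_l2[OF L n_pos(1), of u] hnorm_Apow_eq_l2[OF L, of 1 v] hnorm_Apow_eq_l2[OF L, of 3 v]
      hnorm_Apow_eq_l2[OF L n_pos(1), of w]
    by (simp add: add.commute)
  finally show ?thesis .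
qed

lemma hnorm_nonneg: "hnorm L f \<ge> 0"
  unfolding hnorm_def cnorm2sq_eq by (simp add: infsum_nonneg)

lemma Leibniz_Agmon_constant_le:
  assumes "n \<ge> 1" and cA: "cA \<ge> 1 / (sqrt 2 * pi)"
  shows "2 ^ (n - 1) * (4 / pi) \<le> 2 powr (real n + 3/2) * cA"
proof -
  have "(2::real) powr (3/2) = 2 powr (1 + 1/2)" by simp
  also have "\<dots> = 2 * sqrt 2" by (subst powr_add) (simp add: powr_half_sqrt)
  finally have "2 powr (real n + 3/2) = 2 ^ n * 2 * sqrt 2"
    by (simp add: powr_add powr_realpow)
  moreover have "(2::real) ^ n = 2 * 2 ^ (n - 1)"
    using assms(1) by (simp add: power_eq_if)
  ultimately have "2 ^ (n - 1) * (4 / pi) = 2 powr (real n + 3/2) * (1 / (sqrt 2 * pi))"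
    by (simp add: field_simps)
  also have "\<dots> \<le> 2 powr (real n + 3/2) * cA"
    using cA by (intro mult_left_mono) auto
  finally show ?thesis .
qed

theorem lemma5p2:
  fixes L cA :: real and \<alpha> :: nat and u v w :: field2
  assumes L: "L > 0"
    and agmon: "\<forall>z. inD L 1 z \<and> realH z \<longrightarrow>
                   Linf L z \<le> cA * sqrt (hnorm L z) * sqrt (hnorm L (Apow L 1 z))"
    and alpha: "\<alpha> > 3"
    and u: "inD L (real \<alpha> / 2) u"
    and v: "inD L ((real \<alpha> + 1) / 2) v"
    and w: "inD L (real \<alpha>) w"
  shows "cmod (hinner L (Bop L u v) (Apow L (real \<alpha>) w))
    \<le> 2 powr (real \<alpha> + 3/2) * cA *
       (sqrt (hnorm L u) * sqrt (hnorm L (Apow L 1 u)) * hnorm L (Apow L ((1 + real \<alpha>) / 2) v)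
        + hnorm L (Apow L (real \<alpha> / 2) u) * sqrt (hnorm L (Apow L (1/2) v))
          * sqrt (hnorm L (Apow L (3/2) v)))
       * hnorm L (Apow L (real \<alpha> / 2) w)"
proof -
  have "\<alpha> \<ge> 2" \<comment> \<open>all that is needed of \<open>\<alpha> > 3\<close>\<close>
    using alpha by simp
  note estimate = cmod_hinner_Bop_le[OF L this u v w]
  have "2 ^ (\<alpha> - 1) * (4 / pi) \<le> 2 powr (real \<alpha> + 3/2) * cA"
    using alpha Agmon_constant_ge[OF L agmon] by (intro Leibniz_Agmon_constant_le) auto
  then show ?thesis
    by (rule order_trans[OF estimate mult_right_mono[OF mult_right_mono]])
      (auto intro!: add_nonneg_nonneg mult_nonneg_nonneg simp: hnorm_nonneg)
qed

end
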